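(* Let $\tau$ be a substitution over a finite alphabet $A$. Then $\overline\tau$ induces a well-defined map on the Besicovitch space (i.e. $\mathfrak d_H(x,y)=0$ implies $\mathfrak d_H(\overline\tau(x),\overline\tau(y))=0$ for all $x,y\in A^{\mathbb N}$) if and only if $\overline\tau$ is $1$-Lipschitz with respect to $\mathfrak d_H$, i.e. $\mathfrak d_H(\overline\tau(x),\overline\tau(y))\le\mathfrak d_H(x,y)$ for all $x,y\in A^{\mathbb N}$.
   Context: A substitution is a nonerasing monoid morphism $\tau:A^*\to A^*$ (so $\tau(a)$ is a nonempty word for each letter $a$), and $\overline\tau:A^{\mathbb N}\to A^{\mathbb N}$ is $\overline\tau(z)=\tau(z_0)\tau(z_1)\tau(z_2)\cdots$. For words $u,v$ of equal length, $d_H(u,v)$ is the number of positions where they differ; the Besicovitch pseudo-metric is $\mathfrak d_H(x,y)=\limsup_{l\to\infty}\frac{d_H(x_{[0,l)},y_{[0,l)})}{l}$, where $x_{[0,l)}=x_0\cdots x_{l-1}$. *)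

theory Defs
  imports "HOL-Analysis.Analysis" "HOL-Library.Stream"
begin

definition substitution :: "('a \<Rightarrow> 'a list) \<Rightarrow> bool" where
  "substitution \<tau> \<longleftrightarrow> (\<forall>a. \<tau> a \<noteq> [])"

definition subst_ext :: "('a \<Rightarrow> 'a list) \<Rightarrow> 'a stream \<Rightarrow> 'a stream" where
  "subst_ext \<tau> z = flat (smap \<tau> z)"

definition hamming :: "'a list \<Rightarrow> 'a list \<Rightarrow> nat" where
  "hamming u v = card {i. i < length u \<and> u ! i \<noteq> v ! i}"

definition besicovitch :: "'a stream \<Rightarrow> 'a stream \<Rightarrow> ereal" where
  "besicovitch x y =
     limsup (\<lambda>l. ereal (real (hamming (stake l x) (stake l y)) / real l))"

end

theory Submission
  imports Defs
begin

(* If all images tau a have the same length L, letter j of the image of x lies in the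
   image of letter j div L of x; so a mismatch of x and y causes at most L mismatches
   of the images, inside a block of length L, and mismatch densities cannot grow.
   Otherwise choose |tau a| < |tau b| and let D = |tau b| - |tau a|. The sequences a z
   and b z are at distance 0, so by well-definedness the image Z of z is at distance 0
   from Z shifted by D; if Z is periodic this forces Z to have period D. Applied to
   images of periodic sequences, this shows that all fixed points tau(c)^omega coincide.
   Their common value V satisfies tau(c) V = V for every letter c, so the extension of
   tau is constant with value V, and in particular 1-Lipschitz. The converse holds
   because the pseudo-metric is nonnegative. *)

lemma stream_eqI: "(\<And>i. s !! i = t !! i) \<Longrightarrow> s = t"
  by (metis stream_smap_nats ext)

lemma sdrop_mult_eq:
  assumes "sdrop D s = s"
  shows "sdrop (k * D) s = s"
proof (induction k)
  case (Suc k)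
  have "sdrop (Suc k * D) s = sdrop (k * D) (sdrop D s)"
    by simp
  then show ?case
    using assms Suc.IH by simp
qed simp

lemma snth_mod_period: "sdrop D s = s \<Longrightarrow> s !! (i mod D) = s !! i"
  by (metis sdrop_mult_eq sdrop_snth div_mult_mod_eq)

lemma periodic_stream_eqI:
  assumes "0 < D" "sdrop D s = s" "sdrop D t = t"
    and "s = u @- s'" "t = u @- t'" "D \<le> length u"
  shows "s = t"
proof (rule stream_eqI)
  fix i
  have "s !! (i mod D) = t !! (i mod D)"
    using assms(1,4-6) by (metis mod_less_divisor order_less_le_trans shift_snth_less)
  then show "s !! i = t !! i"
    by (metis assms(2,3) snth_mod_period)
qed

lemma sdrop_length_shift_fixed:
  assumes "u @- s = s"
  shows "sdrop (length u) s = s"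
proof -
  have "sdrop (length u) (u @- s) = s"
    by (simp add: sdrop_shift)
  then show ?thesis
    using assms by simp
qed

lemma shift_concat_replicate_fixed: "u @- s = s \<Longrightarrow> concat (replicate n u) @- s = s"
  by (induction n) simp_all

lemma subst_ext_Cons:
  "substitution \<tau> \<Longrightarrow> subst_ext \<tau> (a ## z) = \<tau> a @- subst_ext \<tau> z"
  by (simp add: subst_ext_def substitution_def)

lemma subst_ext_shift:
  "substitution \<tau> \<Longrightarrow> subst_ext \<tau> (w @- z) = concat (map \<tau> w) @- subst_ext \<tau> z"
  by (induction w) (simp_all add: subst_ext_Cons)

lemma length_concat_map_ge:
  "substitution \<tau> \<Longrightarrow> length xs \<le> length (concat (map \<tau> xs))"
proof (induction xs)
  case (Cons a xs)
  then have "0 < length (\<tau> a)"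
    by (simp add: substitution_def)
  with Cons show ?case
    by (simp del: length_greater_0_conv)
qed simp

lemma shift_concat_map_fixed:
  "(\<And>a. \<tau> a @- V = V) \<Longrightarrow> concat (map \<tau> xs) @- V = V"
  by (induction xs) simp_all

lemma subst_ext_eq_common_fixed_point:
  assumes \<tau>: "substitution \<tau>" and fixed: "\<And>a. \<tau> a @- V = V"
  shows "subst_ext \<tau> z = V"
proof (rule stream_eqI)
  fix i
  define w where "w = concat (map \<tau> (stake (Suc i) z))"
  have "i < length w"
    using length_concat_map_ge[OF \<tau>, of "stake (Suc i) z"] by (simp add: w_def)
  moreover have "subst_ext \<tau> z = w @- subst_ext \<tau> (sdrop (Suc i) z)"
    unfolding w_def by (metis \<tau> stake_sdrop subst_ext_shift)
  moreover have "V = w @- V"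
    unfolding w_def using shift_concat_map_fixed[of \<tau> V] fixed by simp
  ultimately show "subst_ext \<tau> z !! i = V !! i"
    by (metis shift_snth_less)
qed

lemma subst_ext_snth_uniform:
  assumes \<tau>: "substitution \<tau>" and L: "\<And>a. length (\<tau> a) = L" and "r < L"
  shows "subst_ext \<tau> x !! (n * L + r) = \<tau> (x !! n) ! r"
proof -
  have "length (concat (map \<tau> (stake n x))) = n * L"
    by (simp add: length_concat L comp_def sum_list_triv)
  moreover have "subst_ext \<tau> x
      = concat (map \<tau> (stake n x)) @- \<tau> (x !! n) @- subst_ext \<tau> (sdrop (Suc n) x)"
    by (metis \<tau> stake_sdrop subst_ext_shift subst_ext_Cons sdrop_simps stream.collapse)
  ultimately show ?thesis
    using assms by simp
qed

definition mismatch_count :: "'a stream \<Rightarrow> 'a stream \<Rightarrow> nat \<Rightarrow> nat" where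
  "mismatch_count x y l = card {i. i < l \<and> x !! i \<noteq> y !! i}"

lemma besicovitch_mismatch_count:
  "besicovitch x y = limsup (\<lambda>l. ereal (real (mismatch_count x y l) / real l))"
proof -
  have "hamming (stake l x) (stake l y) = mismatch_count x y l" for l
    unfolding hamming_def mismatch_count_def by (metis length_stake stake_nth)
  then show ?thesis
    by (simp add: besicovitch_def)
qed

lemma mismatch_count_le_of_subset:
  "{i. i < l \<and> x !! i \<noteq> y !! i} \<subseteq> {..<n} \<Longrightarrow> mismatch_count x y l \<le> n"
  unfolding mismatch_count_def by (metis card_lessThan card_mono finite_lessThan)

lemma mismatch_count_le: "mismatch_count x y l \<le> l"
  by (rule mismatch_count_le_of_subset) auto

lemma besicovitch_nonneg: "0 \<le> besicovitch x y"
  unfolding besicovitch_def by (rule le_Limsup) auto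

lemma besicovitch_refl: "besicovitch x x = 0"
  by (simp add: besicovitch_mismatch_count mismatch_count_def Limsup_const)

lemma besicovitch_shift_same_length:
  assumes "length u = length v"
  shows "besicovitch (u @- z) (v @- z) = 0"
proof -
  have "mismatch_count (u @- z) (v @- z) l \<le> length u" for l
    using assms by (intro mismatch_count_le_of_subset) (auto simp: shift_snth)
  then have "besicovitch (u @- z) (v @- z) \<le> limsup (\<lambda>l. ereal (real (length u) / real l))"
    unfolding besicovitch_mismatch_count
    by (intro Limsup_mono always_eventually allI) (simp add: divide_right_mono)
  also have "\<dots> = 0"
    by (intro lim_imp_Limsup) (simp_all add: zero_ereal_def lim_const_over_n)
  finally show ?thesis
    using besicovitch_nonneg order.antisym by blast
qed

lemma besicovitch_pos_if_mismatch_progression: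
  assumes P: "0 < P" and mismatch: "\<And>k. x !! (c + k * P) \<noteq> y !! (c + k * P)"
  shows "0 < besicovitch x y"
proof -
  define N where "N = c + P"
  define f where "f = (\<lambda>l. ereal (real (mismatch_count x y l) / real l))"
  have N: "0 < N"
    using P by (simp add: N_def)
  have count: "Suc m \<le> mismatch_count x y (Suc m * N)" for m
  proof -
    have "c + k * P < Suc m * N" if "k \<le> m" for k
    proof -
      have "k * P \<le> m * P"
        using that by simp
      moreover have "Suc m * N = c + P + m * P + m * c"
        by (simp add: N_def algebra_simps)
      ultimately show ?thesis
        using P by linarith
    qed
    then have "(\<lambda>k. c + k * P) ` {..m} \<subseteq> {i. i < Suc m * N \<and> x !! i \<noteq> y !! i}"
      using mismatch by auto
    then have
      "card ((\<lambda>k. c + k * P) ` {..m}) \<le> card {i. i < Suc m * N \<and> x !! i \<noteq> y !! i}"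
      by (rule card_mono[rotated]) simp
    moreover have "inj_on (\<lambda>k. c + k * P) {..m}"
      by (intro inj_onI) (use P in simp)
    ultimately have "card {..m} \<le> card {i. i < Suc m * N \<and> x !! i \<noteq> y !! i}"
      by (simp add: card_image)
    then show ?thesis
      by (simp add: mismatch_count_def)
  qed
  have "ereal (1 / real N) \<le> f (Suc m * N)" for m
  proof -
    have "real (Suc m) / real (Suc m * N)
        \<le> real (mismatch_count x y (Suc m * N)) / real (Suc m * N)"
      using count[of m] by (intro divide_right_mono) simp_all
    moreover have "real (Suc m) / real (Suc m * N) = 1 / real N"
      unfolding of_nat_mult by (rule nonzero_divide_mult_cancel_left) simp
    ultimately show ?thesis
      by (simp add: f_def)
  qed
  then have "ereal (1 / real N) \<le> limsup (\<lambda>m. f (Suc m * N))"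
    by (intro le_Limsup always_eventually) auto
  also have "\<dots> \<le> limsup f"
    using limsup_subseq_mono[of "\<lambda>m. Suc m * N" f] N by (simp add: strict_mono_def comp_def)
  finally have "ereal (1 / real N) \<le> besicovitch x y"
    unfolding f_def besicovitch_mismatch_count .
  moreover have "0 < ereal (1 / real N)"
    using N by simp
  ultimately show ?thesis
    by (meson less_le_trans)
qed

lemma sdrop_eq_if_besicovitch_shift_eq_zero:
  assumes Z: "u @- Z = Z" and u: "u \<noteq> []" and pq: "length p < length q"
    and B: "besicovitch (p @- Z) (q @- Z) = 0"
  shows "sdrop (length q - length p) Z = Z"
proof (rule stream_eqI, rule ccontr)
  fix i
  define D where "D = length q - length p"
  assume ne: "sdrop (length q - length p) Z !! i \<noteq> Z !! i"
  have period: "Z !! (k * length u + j) = Z !! j" for k j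
    by (metis Z sdrop_length_shift_fixed sdrop_mult_eq sdrop_snth)
  have mismatch:
    "(p @- Z) !! (length q + i + k * length u) \<noteq> (q @- Z) !! (length q + i + k * length u)" for k
  proof -
    have "(p @- Z) !! (length q + i + k * length u) = Z !! (k * length u + (D + i))"
      using pq by (simp add: D_def algebra_simps)
    moreover have "(q @- Z) !! (length q + i + k * length u) = Z !! (k * length u + i)"
      by (simp add: algebra_simps)
    ultimately show ?thesis
      using ne by (simp add: period sdrop_snth D_def)
  qed
  have "0 < besicovitch (p @- Z) (q @- Z)"
    by (rule besicovitch_pos_if_mismatch_progression[where P = "length u" and c = "length q + i"])
      (use u mismatch in auto)
  with B show False
    by simp
qed

definition besicovitch_well_defined :: "('a stream \<Rightarrow> 'b stream) \<Rightarrow> bool" where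
  "besicovitch_well_defined F \<longleftrightarrow>
    (\<forall>x y. besicovitch x y = 0 \<longrightarrow> besicovitch (F x) (F y) = 0)"

lemma subst_ext_cycle_period:
  assumes \<tau>: "substitution \<tau>" and well_defined: "besicovitch_well_defined (subst_ext \<tau>)"
    and ab: "length (\<tau> a) < length (\<tau> b)" and w: "w \<noteq> []"
  shows "sdrop (length (\<tau> b) - length (\<tau> a)) (subst_ext \<tau> (cycle w))
    = subst_ext \<tau> (cycle w)"
proof (rule sdrop_eq_if_besicovitch_shift_eq_zero[OF _ _ ab])
  show "concat (map \<tau> w) @- subst_ext \<tau> (cycle w) = subst_ext \<tau> (cycle w)"
    by (metis \<tau> w cycle_decomp subst_ext_shift)
  show "concat (map \<tau> w) \<noteq> []"
    using \<tau> w by (cases w) (auto simp: substitution_def)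
  have "besicovitch (a ## cycle w) (b ## cycle w) = 0"
    using besicovitch_shift_same_length[of "[a]" "[b]"] by simp
  then show
    "besicovitch (\<tau> a @- subst_ext \<tau> (cycle w)) (\<tau> b @- subst_ext \<tau> (cycle w)) = 0"
    using well_defined by (simp add: besicovitch_well_defined_def subst_ext_Cons[OF \<tau>, symmetric])
qed

lemma subst_ext_cycle_singleton_fixed:
  assumes \<tau>: "substitution \<tau>"
  shows "\<tau> d @- subst_ext \<tau> (cycle [d]) = subst_ext \<tau> (cycle [d])"
proof -
  have "subst_ext \<tau> (cycle [d]) = subst_ext \<tau> (d ## cycle [d])"
    using cycle_decomp[of "[d]"] by simp
  then show ?thesis
    by (simp add: subst_ext_Cons[OF \<tau>])
qed

lemma subst_ext_cycle_singleton_eq: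
  assumes \<tau>: "substitution \<tau>" and well_defined: "besicovitch_well_defined (subst_ext \<tau>)"
    and ab: "length (\<tau> a) < length (\<tau> b)"
  shows "subst_ext \<tau> (cycle [c]) = subst_ext \<tau> (cycle [e])"
proof -
  define D where "D = length (\<tau> b) - length (\<tau> a)"
  define F where "F d = subst_ext \<tau> (cycle [d])" for d
  define block where "block d = concat (replicate D (\<tau> d))" for d
  \<comment> \<open>W begins with block c and, after a shift by a multiple of its period D, with block e;
    so W agrees with both fixed points on a full period.\<close>
  define w where "w = replicate D c @ replicate D e"
  define W where "W = subst_ext \<tau> (cycle w)"
  have D: "0 < D"
    using ab by (simp add: D_def)
  have F_period: "sdrop D (F d) = F d" for d
    using subst_ext_cycle_period[OF \<tau> well_defined ab, of "[d]"] by (simp add: D_def F_def)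
  have "w \<noteq> []"
    using D by (simp add: w_def)
  have W_period: "sdrop D W = W"
    using subst_ext_cycle_period[OF \<tau> well_defined ab \<open>w \<noteq> []\<close>] by (simp add: D_def W_def)
  have length_block: "length (block d) = length (\<tau> d) * D" for d
    by (simp add: block_def length_concat sum_list_replicate)
  have long_block: "D \<le> length (block d)" for d
  proof -
    have "1 \<le> length (\<tau> d)"
      using \<tau> by (simp add: substitution_def Suc_le_eq)
    then show ?thesis
      unfolding length_block using mult_le_mono1[of 1 "length (\<tau> d)" D] by simp
  qed
  have F_fixed: "F d = block d @- F d" for d
    unfolding F_def block_def
    by (metis shift_concat_replicate_fixed subst_ext_cycle_singleton_fixed[OF \<tau>])
  have "W = subst_ext \<tau> (w @- cycle w)"
    unfolding W_def using arg_cong[OF cycle_decomp[OF \<open>w \<noteq> []\<close>]] .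
  also have "\<dots> = block c @- block e @- W"
    by (simp add: subst_ext_shift[OF \<tau>] w_def W_def block_def map_replicate_const)
  finally have W: "W = block c @- block e @- W" .
  have "sdrop (length (block c)) W = block e @- W"
    using arg_cong[OF W, of "sdrop (length (block c))"] by (simp add: sdrop_shift)
  moreover have "sdrop (length (block c)) W = W"
    unfolding length_block by (rule sdrop_mult_eq[OF W_period])
  ultimately have W': "W = block e @- W"
    by simp
  have "F c = W"
    by (rule periodic_stream_eqI[OF D F_period W_period F_fixed W long_block])
  moreover have "F e = W"
    by (rule periodic_stream_eqI[OF D F_period W_period F_fixed W' long_block])
  ultimately show ?thesis
    by (simp add: F_def)
qed

lemma subst_ext_const_if_well_defined:
  assumes \<tau>: "substitution \<tau>" and well_defined: "besicovitch_well_defined (subst_ext \<tau>)"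
    and ab: "length (\<tau> a) < length (\<tau> b)"
  shows "subst_ext \<tau> x = subst_ext \<tau> y"
proof -
  define V where "V = subst_ext \<tau> (cycle [a])"
  have "\<tau> c @- V = V" for c
    unfolding V_def
    by (metis subst_ext_cycle_singleton_eq[OF \<tau> well_defined ab] subst_ext_cycle_singleton_fixed[OF \<tau>])
  then show ?thesis
    using subst_ext_eq_common_fixed_point[OF \<tau>] by metis
qed

lemma mismatch_count_subst_ext_uniform_le:
  assumes \<tau>: "substitution \<tau>" and L: "\<And>a. length (\<tau> a) = L" and l: "l \<le> k * L"
  shows "mismatch_count (subst_ext \<tau> x) (subst_ext \<tau> y) l \<le> L * mismatch_count x y k"
proof -
  define M where "M = {n. n < k \<and> x !! n \<noteq> y !! n}"
  have L0: "0 < L"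
    using \<tau> L by (metis length_greater_0_conv substitution_def)
  have "{j. j < l \<and> subst_ext \<tau> x !! j \<noteq> subst_ext \<tau> y !! j}
      \<subseteq> (\<lambda>(n, r). n * L + r) ` (M \<times> {..<L})"
  proof safe
    fix j assume j: "j < l" and ne: "subst_ext \<tau> x !! j \<noteq> subst_ext \<tau> y !! j"
    have j_decomp: "j = j div L * L + j mod L" and r: "j mod L < L"
      using L0 by simp_all
    have "j div L < k"
      using j l L0 by (simp add: div_less_iff_less_mult)
    moreover have "x !! (j div L) \<noteq> y !! (j div L)"
      using ne subst_ext_snth_uniform[OF \<tau> L r] j_decomp by metis
    ultimately show "j \<in> (\<lambda>(n, r). n * L + r) ` (M \<times> {..<L})"
      using r j_decomp by (intro image_eqI[of _ _ "(j div L, j mod L)"]) (auto simp: M_def)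
  qed
  then have "mismatch_count (subst_ext \<tau> x) (subst_ext \<tau> y) l
      \<le> card ((\<lambda>(n, r). n * L + r) ` (M \<times> {..<L}))"
    unfolding mismatch_count_def by (rule card_mono[rotated]) (simp add: M_def)
  also have "\<dots> \<le> card (M \<times> {..<L})"
    by (rule card_image_le) (simp add: M_def)
  also have "\<dots> = L * mismatch_count x y k"
    by (simp add: card_cartesian_product M_def mismatch_count_def)
  finally show ?thesis .
qed

lemma limsup_compose_filterlim_le:
  fixes f :: "nat \<Rightarrow> 'a::complete_lattice"
  assumes "filterlim r sequentially sequentially"
  shows "limsup (\<lambda>n. f (r n)) \<le> limsup f"
proof -
  have "limsup (\<lambda>n. f (r n)) \<le> Limsup (filtermap r sequentially) f"
    by (rule Limsup_filtermap_ge)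
  also have "\<dots> \<le> limsup f"
    using assms unfolding Limsup_def filterlim_def le_filter_def
    by (intro INF_superset_mono) auto
  finally show ?thesis .
qed

lemma mismatch_density_subst_ext_uniform_le:
  fixes l :: nat
  assumes \<tau>: "substitution \<tau>" and L: "\<And>a. length (\<tau> a) = L"
  defines "k \<equiv> l div L + 1"
  shows "real (mismatch_count (subst_ext \<tau> x) (subst_ext \<tau> y) l) / real l
    \<le> real L / real l + real (mismatch_count x y k) / real k"
proof (cases "l = 0")
  case False
  define H where "H = mismatch_count x y k"
  have L0: "0 < L"
    using \<tau> L by (metis length_greater_0_conv substitution_def)
  have "l = l div L * L + l mod L" "l mod L < L" "k * L = l div L * L + L"
    using L0 by (simp_all add: k_def)
  then have kL: "l \<le> k * L" "k * L \<le> l + L"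
    by linarith+
  have "L * H * k = H * (k * L)"
    by (simp add: algebra_simps)
  also have "\<dots> \<le> H * l + H * L"
    using kL(2) by (metis add_mult_distrib2 mult_le_mono2)
  also have "\<dots> \<le> H * l + L * k"
    using mismatch_count_le[of x y k] by (simp add: H_def)
  finally have "real L * real H * real k \<le> real H * real l + real L * real k"
    by (simp flip: of_nat_mult of_nat_add)
  moreover have "0 < k"
    by (simp add: k_def)
  ultimately have "real (L * H) / real l \<le> real L / real l + real H / real k"
    using False by (simp add: field_simps)
  moreover have
    "real (mismatch_count (subst_ext \<tau> x) (subst_ext \<tau> y) l) / real l \<le> real (L * H) / real l"
    unfolding H_def using mismatch_count_subst_ext_uniform_le[OF \<tau> L kL(1), of x y]
    by (intro divide_right_mono) (simp_all flip: of_nat_mult)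
  ultimately show ?thesis
    by (simp add: H_def)
qed simp

lemma besicovitch_subst_ext_uniform_le:
  assumes \<tau>: "substitution \<tau>" and L: "\<And>a. length (\<tau> a) = L"
  shows "besicovitch (subst_ext \<tau> x) (subst_ext \<tau> y) \<le> besicovitch x y"
proof -
  define f where "f l = real (mismatch_count x y l) / real l" for l
  define r where "r l = l div L + 1" for l
  have L0: "0 < L"
    using \<tau> L by (metis length_greater_0_conv substitution_def)
  have r: "filterlim r sequentially sequentially"
    unfolding filterlim_at_top eventually_sequentially
  proof
    fix Z
    have "Z \<le> r l" if "Z * L \<le> l" for l
      using that less_eq_div_iff_mult_less_eq[OF L0, of Z l] by (simp add: r_def)
    then show "\<exists>N. \<forall>l\<ge>N. Z \<le> r l"
      by blast
  qed
  have "besicovitch (subst_ext \<tau> x) (subst_ext \<tau> y)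
      \<le> limsup (\<lambda>l. ereal (real L / real l) + ereal (f (r l)))"
    unfolding besicovitch_mismatch_count
    using mismatch_density_subst_ext_uniform_le[OF \<tau> L]
    by (intro Limsup_mono always_eventually) (simp add: f_def r_def)
  also have "\<dots> = 0 + limsup (\<lambda>l. ereal (f (r l)))"
    by (intro ereal_limsup_lim_add) (simp_all add: zero_ereal_def lim_const_over_n)
  also have "\<dots> \<le> limsup (\<lambda>l. ereal (f l))"
    using limsup_compose_filterlim_le[OF r] by simp
  also have "\<dots> = besicovitch x y"
    by (simp add: besicovitch_mismatch_count f_def)
  finally show ?thesis .
qed

theorem mainTheorem4:
  fixes \<tau> :: "'a::finite \<Rightarrow> 'a list"
  assumes "substitution \<tau>"
  shows "(\<forall>x y. besicovitch x y = 0 \<longrightarrow>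
            besicovitch (subst_ext \<tau> x) (subst_ext \<tau> y) = 0)
         \<longleftrightarrow>
         (\<forall>x y. besicovitch (subst_ext \<tau> x) (subst_ext \<tau> y) \<le> besicovitch x y)"
proof
  assume "\<forall>x y. besicovitch x y = 0 \<longrightarrow> besicovitch (subst_ext \<tau> x) (subst_ext \<tau> y) = 0"
  then have well_defined: "besicovitch_well_defined (subst_ext \<tau>)"
    by (simp add: besicovitch_well_defined_def)
  show "\<forall>x y. besicovitch (subst_ext \<tau> x) (subst_ext \<tau> y) \<le> besicovitch x y"
  proof (cases "\<exists>a b. length (\<tau> a) < length (\<tau> b)")
    case True
    then obtain a b where "length (\<tau> a) < length (\<tau> b)"
      by blast
    then show ?thesis
      using subst_ext_const_if_well_defined[OF assms well_defined] besicovitch_refl besicovitch_nonneg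
      by metis
  next
    case False
    then have "\<And>a. length (\<tau> a) = length (\<tau> undefined)"
      by (meson linorder_neqE_nat)
    then show ?thesis
      using besicovitch_subst_ext_uniform_le[OF assms] by blast
  qed
next
  assume "\<forall>x y. besicovitch (subst_ext \<tau> x) (subst_ext \<tau> y) \<le> besicovitch x y"
  then show "\<forall>x y. besicovitch x y = 0 \<longrightarrow> besicovitch (subst_ext \<tau> x) (subst_ext \<tau> y) = 0"
    using besicovitch_nonneg by (metis order.antisym)
qed

end
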